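(* Let $Y_0$ be $\mathbb Z_+$-valued with $(m-1)\mathbf E(Y_0m^{Y_0})=\mathbf E(m^{Y_0})<\infty$. Fix an integer $i\ge0$ and let $N_n$ denote either $N_n^\#$ or $N_n^{(i)}$. Then for all $n\ge1$, $$\mathbf E[m^{Y_n}(1+Y_n)N_n]=\mathbf E[m^{Y_0}(1+Y_0)N_0]\prod_{k=0}^{n-1}[\mathbf E(m^{Y_k})]^{m-1}.$$ (Here $\mathbf E[m^{Y_0}(1+Y_0)N_0^{(i)}]=m^i(1+i)\mathbf P(Y_0=i)$ and $\mathbf E[m^{Y_0}(1+Y_0)N_0^\#]=\mathbf E[m^{Y_0}(1+Y_0)]$.)
   Context: Fix an integer $m\ge2$. Hierarchical representation: on a reversed $m$-ary tree (each vertex $x$ of generation $|x|\ge1$ has $m$ parents $x^{(1)},\dots,x^{(m)}$ in generation $|x|-1$ and each vertex a unique child in the next generation), let $Y(x)$, $|x|=0$, be i.i.d. with the law of $Y_0$ and $Y(x):=(Y(x^{(1)})+\cdots+Y(x^{(m)})-1)^+$ for $|x|\ge1$. A path leading to $x$ is $(x_0,\dots,x_{|x|}=x)$ with $|x_j|=j$ and $x_{j+1}$ the child of $x_j$; it is open if for every vertex $z$ on it with $|z|\ge1$, $Y(z^{(1)})+\cdots+Y(z^{(m)})\ge1$ (paths with $|x|=0$ are open). $N^\#(x)$ is the number of open paths leading to $x$, $N^{(i)}(x)$ the number of those with $Y(x_0)=i$. For a fixed vertex $\mathfrak e_n$ of generation $n$ (with $\mathfrak e_{n+1}$ the child of $\mathfrak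 e_n$), $N_n^\#:=N^\#(\mathfrak e_n)$, $N_n^{(i)}:=N^{(i)}(\mathfrak e_n)$, $Y_n:=Y(\mathfrak e_n)$; $Y_n$ has the law of the $n$-th term of the recursive system $Y_{n+1}\overset d=(Y_{n,1}+\cdots+Y_{n,m}-1)^+$. *)

theory Defs
  imports "HOL-Probability.Probability"
begin

text \<open>The part of the reversed m-ary tree above the fixed vertex e_n.
  A vertex is addressed by a list xs of parent choices (entries < m),
  read from e_n upwards; the vertex with address xs at generation d has
  parents xs @ [j], j < m, at generation d - 1. Generation-0 vertices
  (the leaves above e_n) carry the i.i.d. initial values y.\<close>

definition leaves :: "nat \<Rightarrow> nat \<Rightarrow> nat list set" where
  "leaves m n = {zs. length zs = n \<and> set zs \<subseteq> {..<m}}"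

text \<open>Yval m d y xs = Y of the vertex at generation d with address xs;
  nat subtraction realises the positive part.\<close>
fun Yval :: "nat \<Rightarrow> nat \<Rightarrow> (nat list \<Rightarrow> nat) \<Rightarrow> nat list \<Rightarrow> nat" where
  "Yval m 0 y xs = y xs"
| "Yval m (Suc d) y xs = (\<Sum>j<m. Yval m d y (xs @ [j])) - 1"

text \<open>A path leading to the vertex (generation d, address xs) is given by
  the further choices zs (length d); its vertex at generation k is
  xs @ take (d - k) zs.\<close>
definition open_path :: "nat \<Rightarrow> (nat list \<Rightarrow> nat) \<Rightarrow> nat \<Rightarrow> nat list \<Rightarrow> nat list \<Rightarrow> bool" where
  "open_path m y d xs zs \<longleftrightarrow> zs \<in> leaves m d \<and>
     (\<forall>k\<in>{1..d}. (\<Sum>j<m. Yval m (k - 1) y (xs @ take (d - k) zs @ [j])) \<ge> 1)"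

definition Nsharp :: "nat \<Rightarrow> nat \<Rightarrow> (nat list \<Rightarrow> nat) \<Rightarrow> nat" where
  "Nsharp m n y = card {zs. open_path m y n [] zs}"

definition Ni :: "nat \<Rightarrow> nat \<Rightarrow> nat \<Rightarrow> (nat list \<Rightarrow> nat) \<Rightarrow> nat" where
  "Ni m i n y = card {zs. open_path m y n [] zs \<and> y zs = i}"

definition tree_pmf :: "nat \<Rightarrow> nat pmf \<Rightarrow> nat \<Rightarrow> (nat list \<Rightarrow> nat) pmf" where
  "tree_pmf m p n = Pi_pmf (leaves m n) 0 (\<lambda>_. p)"

end

theory Submission
  imports Defs
begin

text \<open>Grafting the m subtrees above the root onto a common root identifies the law of the
  initial values at generation n + 1 with the m-fold product of the law at generation n, and
  Y, N^# and N^(i) at the root are functions of the subtrees: with S the sum of the children's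
  values, Y' = (S - 1)^+ and N' = [S \<ge> 1] (N_1 + ... + N_m). The pointwise identity
  m m^Y' (1 + Y') N' = m^S S (N_1 + ... + N_m) expands into a sum of products over the children,
  so by independence one generation multiplies E[m^Y (1 + Y) N] by (E m^Y)^(m-1), provided
  (m - 1) E[Y m^Y] = E[m^Y]. This balance condition, together with finiteness of E[m^Y],
  propagates along the recursion by the same computation.\<close>

definition subtree :: "(nat list \<Rightarrow> 'a) \<Rightarrow> nat \<Rightarrow> nat list \<Rightarrow> 'a" where
  "subtree y l = (\<lambda>zs. y (l # zs))"

definition graft :: "(nat \<Rightarrow> nat list \<Rightarrow> 'a::zero) \<Rightarrow> nat list \<Rightarrow> 'a" where
  "graft F = (\<lambda>xs. case xs of [] \<Rightarrow> 0 | l # zs \<Rightarrow> F l zs)"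

lemma subtree_graft [simp]: "subtree (graft F) l = F l"
  by (simp add: subtree_def graft_def)

lemma graft_Cons [simp]: "graft F (l # zs) = F l zs"
  by (simp add: graft_def)

lemma inj_graft: "inj graft"
proof (rule injI)
  fix F G :: "nat \<Rightarrow> nat list \<Rightarrow> 'a" assume "graft F = graft G"
  then show "F = G" by (metis subtree_graft ext)
qed

lemma Yval_Cons: "Yval m d y (l # xs) = Yval m d (subtree y l) xs"
  by (induction d arbitrary: xs) (simp_all add: subtree_def)

lemma Yval_Suc_Nil: "Yval m (Suc d) y [] = (\<Sum>l<m. Yval m d (subtree y l) []) - 1"
  by (simp add: Yval_Cons)

lemma finite_leaves: "finite (leaves m n)"
proof -
  have "leaves m n = {xs. set xs \<subseteq> {..<m} \<and> length xs = n}" by (auto simp: leaves_def)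
  then show ?thesis by (simp add: finite_lists_length_eq)
qed

lemma Cons_in_leaves_Suc: "l # zs \<in> leaves m (Suc n) \<longleftrightarrow> l < m \<and> zs \<in> leaves m n"
  by (auto simp: leaves_def)

lemma Nil_notin_leaves_Suc: "[] \<notin> leaves m (Suc n)"
  by (simp add: leaves_def)

lemma leaves_Suc: "leaves m (Suc n) = (\<Union>l<m. Cons l ` leaves m n)"
  by (auto simp: leaves_def length_Suc_conv)

lemma prod_leaves_Suc:
  "(\<Prod>xs\<in>leaves m (Suc n). g xs) = (\<Prod>l<m. \<Prod>zs\<in>leaves m n. g (l # zs))"
  unfolding leaves_Suc
  by (subst prod.UNION_disjoint) (auto simp: finite_leaves prod.reindex)

lemma open_path_Suc_Nil:
  "open_path m y (Suc n) [] zs \<longleftrightarrow>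
     (\<exists>l zs'. zs = l # zs' \<and> l < m \<and> 1 \<le> (\<Sum>j<m. Yval m n (subtree y j) []) \<and>
        open_path m (subtree y l) n [] zs')"
proof (cases zs)
  case Nil
  then show ?thesis by (auto simp: open_path_def leaves_def)
next
  case (Cons l zs')
  have "Yval m (k - 1) y (take (Suc n - k) (l # zs') @ [j])
      = Yval m (k - 1) (subtree y l) (take (n - k) zs' @ [j])" if "k \<in> {1..n}" for k j
    using that by (simp add: Suc_diff_le Yval_Cons)
  then have inner: "(\<forall>k\<in>{1..n}. 1 \<le> (\<Sum>j<m. Yval m (k - 1) y (take (Suc n - k) (l # zs') @ [j])))
      \<longleftrightarrow> (\<forall>k\<in>{1..n}. 1 \<le> (\<Sum>j<m. Yval m (k - 1) (subtree y l) (take (n - k) zs' @ [j])))"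
    by simp
  have "{1..Suc n} = insert (Suc n) {1..n}" by auto
  then show ?thesis
    unfolding Cons open_path_def using inner
    by (simp add: Cons_in_leaves_Suc Yval_Cons) blast
qed

lemma card_Cons_split:
  fixes m :: nat
  assumes "\<And>zs. Q zs \<longleftrightarrow> (\<exists>l zs'. zs = l # zs' \<and> l < m \<and> c \<and> R l zs')"
    and "\<And>l. finite {zs. R l zs}"
  shows "card {zs. Q zs} = (if c then \<Sum>l<m. card {zs. R l zs} else 0)"
proof (cases c)
  case True
  then have "{zs. Q zs} = (\<Union>l<m. Cons l ` {zs. R l zs})" by (auto simp: assms(1))
  also have "card \<dots> = (\<Sum>l<m. card (Cons l ` {zs. R l zs}))"
    by (rule card_UN_disjoint) (auto simp: assms(2))
  also have "\<dots> = (\<Sum>l<m. card {zs. R l zs})"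
    by (simp add: card_image)
  finally show ?thesis using True by simp
next
  case False
  then show ?thesis by (simp add: assms(1))
qed

lemma finite_open_paths: "finite {zs. open_path m y n xs zs \<and> P zs}"
  by (rule finite_subset[OF _ finite_leaves[of m n]]) (auto simp: open_path_def)

lemma Nsharp_Suc:
  "Nsharp m (Suc n) y = (if 1 \<le> (\<Sum>l<m. Yval m n (subtree y l) [])
     then \<Sum>l<m. Nsharp m n (subtree y l) else 0)"
  unfolding Nsharp_def
  using finite_open_paths[where P = "\<lambda>_. True"] by (intro card_Cons_split open_path_Suc_Nil) simp

lemma Ni_Suc:
  "Ni m i (Suc n) y = (if 1 \<le> (\<Sum>l<m. Yval m n (subtree y l) [])
     then \<Sum>l<m. Ni m i n (subtree y l) else 0)"
  unfolding Ni_def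
  by (rule card_Cons_split) (auto simp: open_path_Suc_Nil subtree_def finite_open_paths)

lemma prod_if_zero:
  fixes a :: "'a \<Rightarrow> 'b::comm_semiring_1"
  assumes "finite A"
  shows "(\<Prod>x\<in>A. if P x then a x else 0) = (if \<forall>x\<in>A. P x then \<Prod>x\<in>A. a x else 0)"
proof (cases "\<forall>x\<in>A. P x")
  case False
  then show ?thesis using assms by (auto intro!: prod_zero)
qed simp

lemma pmf_tree_pmf_Suc_graft:
  "pmf (tree_pmf m p (Suc n)) (graft F) = pmf (Pi_pmf {..<m} (\<lambda>_. 0) (\<lambda>_. tree_pmf m p n)) F"
proof -
  have support: "(\<forall>xs. xs \<notin> leaves m (Suc n) \<longrightarrow> graft F xs = 0)
      \<longleftrightarrow> (\<forall>l. l \<notin> {..<m} \<longrightarrow> F l = (\<lambda>_. 0)) \<and> (\<forall>l\<in>{..<m}. \<forall>zs. zs \<notin> leaves m n \<longrightarrow> F l zs = 0)"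
    (is "?L \<longleftrightarrow> _")
  proof
    assume ?L
    have "F l zs = 0" if "\<not> (l < m \<and> zs \<in> leaves m n)" for l zs
    proof -
      have "l # zs \<notin> leaves m (Suc n)"
        using that by (simp add: Cons_in_leaves_Suc)
      then have "graft F (l # zs) = 0"
        using \<open>?L\<close> by blast
      then show ?thesis by simp
    qed
    then show "(\<forall>l. l \<notin> {..<m} \<longrightarrow> F l = (\<lambda>_. 0)) \<and> (\<forall>l\<in>{..<m}. \<forall>zs. zs \<notin> leaves m n \<longrightarrow> F l zs = 0)"
      by auto
  qed (auto simp: graft_def Cons_in_leaves_Suc split: list.split; metis lessThan_iff)
  show ?thesis
    unfolding tree_pmf_def pmf_Pi[OF finite_leaves] pmf_Pi[OF finite_lessThan] support
      prod_leaves_Suc graft_Cons prod_if_zero[OF finite_lessThan]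
    by auto
qed

lemma tree_pmf_Suc:
  "tree_pmf m p (Suc n) = map_pmf graft (Pi_pmf {..<m} (\<lambda>_. 0) (\<lambda>_. tree_pmf m p n))"
proof (rule pmf_eqI)
  fix y :: "nat list \<Rightarrow> nat"
  show "pmf (tree_pmf m p (Suc n)) y = pmf (map_pmf graft (Pi_pmf {..<m} (\<lambda>_. 0) (\<lambda>_. tree_pmf m p n))) y"
  proof (cases "y [] = 0")
    case True
    then have "y = graft (subtree y)"
      by (auto simp: graft_def subtree_def fun_eq_iff split: list.split)
    then show ?thesis
      by (metis pmf_tree_pmf_Suc_graft pmf_map_inj' inj_graft)
  next
    case False
    have "y \<notin> range graft" using False by (auto simp: graft_def)
    then have "pmf (map_pmf graft (Pi_pmf {..<m} (\<lambda>_. 0) (\<lambda>_. tree_pmf m p n))) y = 0"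
      by (auto intro: pmf_map_outside)
    moreover have "pmf (tree_pmf m p (Suc n)) y = 0"
      unfolding tree_pmf_def using False Nil_notin_leaves_Suc
      by (intro pmf_Pi_outside finite_leaves) blast
    ultimately show ?thesis by simp
  qed
qed

lemma tree_pmf_0: "tree_pmf m p 0 = map_pmf (\<lambda>v xs. if xs = [] then v else 0) p"
proof -
  have "leaves m 0 = {[]}" by (auto simp: leaves_def)
  then show ?thesis by (simp add: tree_pmf_def Pi_pmf_singleton)
qed

lemma prod_pick_two:
  fixes a b c :: "nat \<Rightarrow> 'a::comm_monoid_mult"
  assumes "j < m" "k < m"
  shows "(\<Prod>l<m. a l * (if l = k then b l else 1) * (if l = j then c l else 1))
       = (\<Prod>l<m. a l) * b k * c j"
  using assms by (simp add: prod.distrib prod.delta)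

lemma prod_indicator_eq_zero:
  fixes Y :: "nat \<Rightarrow> nat"
  shows "(\<Prod>l<m. if Y l = 0 then 1 else 0 :: nat) = (if (\<Sum>l<m. Y l) = 0 then 1 else 0)"
  by (auto simp: prod_zero_iff)

lemma weighted_offspring_identity:
  fixes Y N :: "nat \<Rightarrow> nat" and m :: nat
  defines "S \<equiv> \<Sum>l<m. Y l"
  shows "m * (m ^ (S - 1) * (1 + (S - 1)) * (if 1 \<le> S then \<Sum>j<m. N j else 0))
     = (\<Sum>j<m. \<Sum>k<m. \<Prod>l<m. m ^ Y l * (if l = k then Y l else 1) * (if l = j then N l else 1))"
proof -
  have "m * (m ^ (S - 1) * (1 + (S - 1)) * (if 1 \<le> S then \<Sum>j<m. N j else 0)) = m ^ S * S * (\<Sum>j<m. N j)"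
    by (cases S) (simp_all add: mult_ac)
  also have "\<dots> = (\<Sum>j<m. m ^ S * S * N j)"
    by (simp add: sum_distrib_left)
  also have "\<dots> = (\<Sum>j<m. \<Sum>k<m. m ^ S * Y k * N j)"
    by (intro sum.cong refl) (simp add: S_def sum_distrib_left sum_distrib_right)
  also have "\<dots> = (\<Sum>j<m. \<Sum>k<m. \<Prod>l<m. m ^ Y l * (if l = k then Y l else 1) * (if l = j then N l else 1))"
    unfolding S_def by (intro sum.cong refl) (simp add: prod_pick_two power_sum)
  finally show ?thesis .
qed

lemma offspring_power_identity:
  fixes Y :: "nat \<Rightarrow> nat" and m :: nat
  assumes "m \<ge> 1"
  defines "S \<equiv> \<Sum>l<m. Y l"
  shows "m * m ^ (S - 1) = (\<Prod>l<m. m ^ Y l) + (m - 1) * (\<Prod>l<m. if Y l = 0 then 1 else 0)"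
proof -
  have "(\<Prod>l<m. m ^ Y l) = m ^ S"
    by (simp add: S_def power_sum)
  then show ?thesis
    using assms(1) by (cases S) (simp_all add: S_def prod_indicator_eq_zero)
qed

lemma prod_if_two_indices:
  fixes A B C D :: "'a::comm_monoid_mult"
  assumes "j < m" "k < m"
  shows "(\<Prod>l<m. if l = k then (if l = j then C else B) else (if l = j then D else A))
       = (if k = j then C * A ^ (m - 1) else B * D * A ^ (m - 2))"
proof -
  let ?f = "\<lambda>l. if l = k then (if l = j then C else B) else (if l = j then D else A)"
  have "(\<Prod>l<m. ?f l) = ?f k * (\<Prod>l\<in>{..<m} - {k}. ?f l)"
    using assms by (intro prod.remove) auto
  moreover have "(\<Prod>l\<in>{..<m} - {k}. ?f l) = A ^ (m - 1)" if "k = j"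
    using that assms by (simp add: card_Diff_singleton)
  moreover have "(\<Prod>l\<in>{..<m} - {k}. ?f l) = D * A ^ (m - 2)" if "k \<noteq> j"
  proof -
    have "(\<Prod>l\<in>{..<m} - {k}. ?f l) = ?f j * (\<Prod>l\<in>{..<m} - {k} - {j}. ?f l)"
      using assms that by (intro prod.remove) auto
    also have "(\<Prod>l\<in>{..<m} - {k} - {j}. ?f l) = A ^ (m - 2)"
      using assms that by (simp add: card_Diff_singleton numeral_2_eq_2)
    finally show ?thesis using that by simp
  qed
  ultimately show ?thesis by (simp add: mult.assoc)
qed

lemma sum_if_one_index:
  fixes X Z :: "'a::comm_semiring_1"
  assumes "j < m"
  shows "(\<Sum>k<m. if k = j then X else Z) = X + of_nat (m - 1) * Z"
proof -
  have "(\<Sum>k<m. if k = j then X else Z) = X + (\<Sum>k\<in>{..<m} - {j}. if k = j then X else Z)"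
    using assms by (subst sum.remove[of _ j]) auto
  also have "(\<Sum>k\<in>{..<m} - {j}. if k = j then X else Z) = of_nat (m - 1) * Z"
    using assms by (simp add: of_nat_diff)
  finally show ?thesis .
qed

lemma nn_integral_Pi_pmf_offspring_weight:
  fixes q :: "'a pmf" and Y N :: "'a \<Rightarrow> nat" and m :: nat
  assumes "m \<ge> 2"
    and balance: "of_nat (m - 1) * (\<integral>\<^sup>+x. of_nat (Y x * m ^ Y x) \<partial>q) = (\<integral>\<^sup>+x. of_nat (m ^ Y x) \<partial>q)"
  shows "(\<integral>\<^sup>+F. of_nat (m ^ ((\<Sum>l<m. Y (F l)) - 1) * (1 + ((\<Sum>l<m. Y (F l)) - 1))
              * (if 1 \<le> (\<Sum>l<m. Y (F l)) then \<Sum>l<m. N (F l) else 0)) \<partial>Pi_pmf {..<m} d (\<lambda>_. q))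
       = (\<integral>\<^sup>+x. of_nat (m ^ Y x * (1 + Y x) * N x) \<partial>q) * (\<integral>\<^sup>+x. of_nat (m ^ Y x) \<partial>q) ^ (m - 1)"
    (is "?lhs = ?rhs")
proof -
  define A where "A = (\<integral>\<^sup>+x. of_nat (m ^ Y x) \<partial>q)"
  define B where "B = (\<integral>\<^sup>+x. of_nat (Y x * m ^ Y x) \<partial>q)"
  define C where "C = (\<integral>\<^sup>+x. of_nat (m ^ Y x * Y x * N x) \<partial>q)"
  define D where "D = (\<integral>\<^sup>+x. of_nat (m ^ Y x * N x) \<partial>q)"
  define f :: "nat \<Rightarrow> nat \<Rightarrow> nat \<Rightarrow> 'a \<Rightarrow> ennreal" where
    "f j k l x = of_nat (m ^ Y x * (if l = k then Y x else 1) * (if l = j then N x else 1))" for j k l x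
  have integral_f: "(\<integral>\<^sup>+x. f j k l x \<partial>q) = (if l = k then (if l = j then C else B) else (if l = j then D else A))"
    for j k l
    by (cases "l = k"; cases "l = j") (simp_all add: f_def A_def B_def C_def D_def mult_ac)
  have balance_AB: "of_nat (m - 1) * B = A"
    using balance by (simp add: A_def B_def)
  have power_A: "A * A ^ (m - 2) = A ^ (m - 1)"
    using assms(1) by (simp add: Suc_diff_Suc numeral_2_eq_2 flip: power_Suc)
  have sum_k: "(\<Sum>k<m. \<Prod>l<m. \<integral>\<^sup>+x. f j k l x \<partial>q) = (C + D) * A ^ (m - 1)" if "j < m" for j
  proof -
    have "(\<Sum>k<m. \<Prod>l<m. \<integral>\<^sup>+x. f j k l x \<partial>q)
        = (\<Sum>k<m. if k = j then C * A ^ (m - 1) else B * D * A ^ (m - 2))"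
      using that by (intro sum.cong refl) (simp add: integral_f prod_if_two_indices)
    also have "\<dots> = C * A ^ (m - 1) + D * ((of_nat (m - 1) * B) * A ^ (m - 2))"
      using that by (simp add: sum_if_one_index mult_ac)
    also have "\<dots> = (C + D) * A ^ (m - 1)"
      unfolding balance_AB power_A distrib_right ..
    finally show ?thesis .
  qed
  have "of_nat m * ?lhs = (\<integral>\<^sup>+F. (\<Sum>j<m. \<Sum>k<m. \<Prod>l<m. f j k l (F l)) \<partial>Pi_pmf {..<m} d (\<lambda>_. q))"
    unfolding f_def of_nat_prod[symmetric] of_nat_sum[symmetric] weighted_offspring_identity[symmetric]
    by (simp add: nn_integral_cmult)
  also have "\<dots> = (\<Sum>j<m. \<Sum>k<m. \<Prod>l<m. \<integral>\<^sup>+x. f j k l x \<partial>q)"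
    by (simp add: nn_integral_sum nn_integral_prod_Pi_pmf)
  also have "\<dots> = of_nat m * ((C + D) * A ^ (m - 1))"
    by (simp add: sum_k)
  also have "C + D = (\<integral>\<^sup>+x. of_nat (m ^ Y x * (1 + Y x) * N x) \<partial>q)"
    by (simp add: C_def D_def algebra_simps flip: nn_integral_add)
  finally have "of_nat m * ?lhs = of_nat m * ?rhs"
    by (simp add: A_def)
  then show ?thesis
    using assms(1) by (simp add: ennreal_mult_cancel_left)
qed

lemma size_biased_offspring_identity:
  fixes Y :: "nat \<Rightarrow> nat" and m :: nat
  defines "S \<equiv> \<Sum>l<m. Y l"
  shows "m * (m ^ (S - 1) + (S - 1) * m ^ (S - 1))
     = m ^ (S - 1) * (1 + (S - 1)) * (if 1 \<le> S then m else 0) + m * (\<Prod>l<m. if Y l = 0 then 1 else 0)"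
  by (cases S) (simp_all add: S_def prod_indicator_eq_zero algebra_simps)

lemma ennreal_balance_from_moments:
  fixes A B Q A' B' :: ennreal and m :: nat
  assumes "m \<ge> 2" and balance: "of_nat (m - 1) * B = A" and "A < \<infinity>" "Q < \<infinity>"
    and first: "of_nat m * A' = A ^ m + of_nat (m - 1) * Q ^ m"
    and second: "of_nat m * (A' + B') = (A + B) * A ^ (m - 1) + of_nat m * Q ^ m"
  shows "of_nat (m - 1) * B' = A' \<and> A' < \<infinity>"
proof -
  have m_Suc: "(of_nat m :: ennreal) = of_nat (m - 1) + 1"
    using assms(1) by (metis Suc_diff_1 add.commute not_numeral_le_zero not_gr0 of_nat_Suc)
  have m_pos: "(of_nat m :: ennreal) \<noteq> 0" "(of_nat m :: ennreal) \<noteq> \<infinity>"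
    using assms(1) by auto
  have "of_nat m * A' < \<infinity>"
    using assms(3,4) by (simp add: first power_less_top_ennreal ennreal_mult_less_top of_nat_less_top)
  moreover have "A' \<le> of_nat m * A'"
    using m_Suc by (simp add: distrib_right)
  ultimately have A'_finite: "A' < \<infinity>"
    by (rule le_less_trans[rotated])
  have A_power: "A * A ^ (m - 1) = A ^ m"
    using assms(1) by (simp flip: power_Suc)
  have "of_nat m * (of_nat (m - 1) * A' + of_nat (m - 1) * B') = of_nat (m - 1) * (of_nat m * (A' + B'))"
    by (simp add: algebra_simps)
  also have "\<dots> = (of_nat (m - 1) * A + A) * A ^ (m - 1) + of_nat m * (of_nat (m - 1) * Q ^ m)"
    unfolding second balance[symmetric] by (simp add: algebra_simps)
  also have "\<dots> = of_nat m * (of_nat m * A')"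
  proof -
    have "of_nat (m - 1) * A + A = of_nat m * A"
      by (simp add: m_Suc distrib_right)
    then show ?thesis
      by (simp only: mult.assoc A_power first distrib_left)
  qed
  also have "\<dots> = of_nat m * (of_nat (m - 1) * A' + A')"
    by (simp add: m_Suc distrib_right)
  finally have "of_nat (m - 1) * A' + of_nat (m - 1) * B' = of_nat (m - 1) * A' + A'"
    using m_pos by (simp add: ennreal_mult_cancel_left)
  then have "of_nat (m - 1) * B' = A'"
    using A'_finite by (auto simp: ennreal_add_left_cancel ennreal_mult_eq_top_iff)
  then show ?thesis
    using A'_finite by simp
qed

lemma nn_integral_Pi_pmf_iid_prod:
  "(\<integral>\<^sup>+F. (\<Prod>l<m. f (F l)) \<partial>Pi_pmf {..<m} d (\<lambda>_. q)) = (\<integral>\<^sup>+x. f x \<partial>q) ^ m"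
  using nn_integral_prod_Pi_pmf[of "{..<m}" d "\<lambda>_. q" "\<lambda>_. f"] by simp

lemma nn_integral_Pi_pmf_offspring_balance:
  fixes q :: "'a pmf" and Y :: "'a \<Rightarrow> nat" and m :: nat
  assumes "m \<ge> 2"
    and balance: "of_nat (m - 1) * (\<integral>\<^sup>+x. of_nat (Y x * m ^ Y x) \<partial>q) = (\<integral>\<^sup>+x. of_nat (m ^ Y x) \<partial>q)"
    and finite: "(\<integral>\<^sup>+x. of_nat (m ^ Y x) \<partial>q) < \<infinity>"
  shows "of_nat (m - 1) * (\<integral>\<^sup>+F. of_nat (((\<Sum>l<m. Y (F l)) - 1) * m ^ ((\<Sum>l<m. Y (F l)) - 1))
             \<partial>Pi_pmf {..<m} d (\<lambda>_. q))
         = (\<integral>\<^sup>+F. of_nat (m ^ ((\<Sum>l<m. Y (F l)) - 1)) \<partial>Pi_pmf {..<m} d (\<lambda>_. q))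
       \<and> (\<integral>\<^sup>+F. of_nat (m ^ ((\<Sum>l<m. Y (F l)) - 1)) \<partial>Pi_pmf {..<m} d (\<lambda>_. q)) < \<infinity>"
  \<comment> \<open>The size-biased moment is the weighted one with N = 1, up to the event S = 0,
    where Y' = 0 but the weight vanishes.\<close>
proof (rule ennreal_balance_from_moments[OF assms(1) balance finite])
  let ?\<Pi> = "Pi_pmf {..<m} d (\<lambda>_. q)"
  let ?S = "\<lambda>F. \<Sum>l<m. Y (F l)"
  define Q where "Q = (\<integral>\<^sup>+x. of_nat (if Y x = 0 then 1 else 0) \<partial>q)"
  show "Q < \<infinity>"
  proof -
    have "Q \<le> (\<integral>\<^sup>+x. 1 \<partial>q)"
      unfolding Q_def by (intro nn_integral_mono) auto
    then show ?thesis by (simp add: le_less_trans)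
  qed
  have "of_nat m * (\<integral>\<^sup>+F. of_nat (m ^ (?S F - 1)) \<partial>?\<Pi>)
      = (\<integral>\<^sup>+F. (\<Prod>l<m. of_nat (m ^ Y (F l))) + of_nat (m - 1) * (\<Prod>l<m. of_nat (if Y (F l) = 0 then 1 else 0)) \<partial>?\<Pi>)"
  proof -
    have "of_nat (m * m ^ (?S F - 1)) = (\<Prod>l<m. of_nat (m ^ Y (F l)))
        + of_nat (m - 1) * (\<Prod>l<m. of_nat (if Y (F l) = 0 then 1 else 0) :: ennreal)" for F
      using offspring_power_identity[of m "\<lambda>l. Y (F l)"] assms(1)
      by (simp only: of_nat_add of_nat_mult of_nat_prod)
    moreover have "of_nat m * (\<integral>\<^sup>+F. of_nat (m ^ (?S F - 1)) \<partial>?\<Pi>) = (\<integral>\<^sup>+F. of_nat (m * m ^ (?S F - 1)) \<partial>?\<Pi>)"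
      by (simp add: nn_integral_cmult)
    ultimately show ?thesis
      by simp
  qed
  then show "of_nat m * (\<integral>\<^sup>+F. of_nat (m ^ (?S F - 1)) \<partial>?\<Pi>)
      = (\<integral>\<^sup>+x. of_nat (m ^ Y x) \<partial>q) ^ m + of_nat (m - 1) * Q ^ m"
    by (simp add: Q_def nn_integral_add nn_integral_cmult
        nn_integral_Pi_pmf_iid_prod[where f = "\<lambda>x. of_nat (m ^ Y x)"]
        nn_integral_Pi_pmf_iid_prod[where f = "\<lambda>x. of_nat (if Y x = 0 then 1 else 0)"]
        del: of_nat_power)
  have pointwise: "of_nat m * (of_nat (m ^ (?S F - 1)) + of_nat ((?S F - 1) * m ^ (?S F - 1)))
      = of_nat (m ^ (?S F - 1) * (1 + (?S F - 1)) * (if 1 \<le> ?S F then m else 0))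
        + of_nat m * (\<Prod>l<m. of_nat (if Y (F l) = 0 then 1 else 0) :: ennreal)" for F
    using arg_cong[OF size_biased_offspring_identity[of m "\<lambda>l. Y (F l)"], of "of_nat :: nat \<Rightarrow> ennreal"]
    by (simp only: of_nat_add of_nat_mult of_nat_prod)
  have "of_nat m * ((\<integral>\<^sup>+F. of_nat (m ^ (?S F - 1)) \<partial>?\<Pi>) + (\<integral>\<^sup>+F. of_nat ((?S F - 1) * m ^ (?S F - 1)) \<partial>?\<Pi>))
      = (\<integral>\<^sup>+F. of_nat m * (of_nat (m ^ (?S F - 1)) + of_nat ((?S F - 1) * m ^ (?S F - 1))) \<partial>?\<Pi>)"
    by (simp add: nn_integral_cmult nn_integral_add del: of_nat_mult)
  also have "\<dots> = (\<integral>\<^sup>+F. of_nat (m ^ (?S F - 1) * (1 + (?S F - 1)) * (if 1 \<le> ?S F then m else 0))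
           + of_nat m * (\<Prod>l<m. of_nat (if Y (F l) = 0 then 1 else 0)) \<partial>?\<Pi>)"
    by (simp only: pointwise)
  also have "\<dots> = (\<integral>\<^sup>+x. of_nat (m ^ Y x) + of_nat (Y x * m ^ Y x) \<partial>q) * (\<integral>\<^sup>+x. of_nat (m ^ Y x) \<partial>q) ^ (m - 1)
      + of_nat m * Q ^ m"
    using nn_integral_Pi_pmf_offspring_weight[OF assms(1) balance, where N = "\<lambda>_. 1" and d = d,
        unfolded sum_constant card_lessThan of_nat_id mult_1_right]
    by (simp add: Q_def nn_integral_add nn_integral_cmult algebra_simps
        nn_integral_Pi_pmf_iid_prod[where f = "\<lambda>x. of_nat (if Y x = 0 then 1 else 0)"]
        del: of_nat_power)
  finally show "of_nat m * ((\<integral>\<^sup>+F. of_nat (m ^ (?S F - 1)) \<partial>?\<Pi>) + (\<integral>\<^sup>+F. of_nat ((?S F - 1) * m ^ (?S F - 1)) \<partial>?\<Pi>))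
      = ((\<integral>\<^sup>+x. of_nat (m ^ Y x) \<partial>q) + (\<integral>\<^sup>+x. of_nat (Y x * m ^ Y x) \<partial>q)) * (\<integral>\<^sup>+x. of_nat (m ^ Y x) \<partial>q) ^ (m - 1)
      + of_nat m * Q ^ m"
    by (simp add: nn_integral_add)
qed

lemma nn_integral_tree_pmf_0: "(\<integral>\<^sup>+y. g (Yval m 0 y []) \<partial>tree_pmf m p 0) = (\<integral>\<^sup>+x. g x \<partial>p)"
  by (simp add: tree_pmf_0)

lemma nn_integral_tree_pmf_Suc:
  "(\<integral>\<^sup>+y. g y \<partial>tree_pmf m p (Suc n)) = (\<integral>\<^sup>+F. g (graft F) \<partial>Pi_pmf {..<m} (\<lambda>_. 0) (\<lambda>_. tree_pmf m p n))"
  by (simp add: tree_pmf_Suc)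

lemma tree_pmf_balance:
  fixes m :: nat and p :: "nat pmf"
  assumes "m \<ge> 2"
    and "of_nat (m - 1) * (\<integral>\<^sup>+x. of_nat (x * m ^ x) \<partial>p) = (\<integral>\<^sup>+x. of_nat (m ^ x) \<partial>p)"
    and "(\<integral>\<^sup>+x. of_nat (m ^ x) \<partial>p) < \<infinity>"
  shows "of_nat (m - 1) * (\<integral>\<^sup>+y. of_nat (Yval m n y [] * m ^ Yval m n y []) \<partial>tree_pmf m p n)
           = (\<integral>\<^sup>+y. of_nat (m ^ Yval m n y []) \<partial>tree_pmf m p n)
       \<and> (\<integral>\<^sup>+y. of_nat (m ^ Yval m n y []) \<partial>tree_pmf m p n) < \<infinity>"
proof (induction n)
  case 0
  then show ?case
    unfolding nn_integral_tree_pmf_0[where g = "\<lambda>x. of_nat (x * m ^ x)"]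
      nn_integral_tree_pmf_0[where g = "\<lambda>x. of_nat (m ^ x)"]
    using assms(2,3) ..
next
  case (Suc n)
  then show ?case
    unfolding nn_integral_tree_pmf_Suc Yval_Suc_Nil subtree_graft
    using nn_integral_Pi_pmf_offspring_balance[OF assms(1), where Y = "\<lambda>y. Yval m n y []"] by blast
qed

lemma tree_pmf_weight_product:
  fixes m :: nat and p :: "nat pmf" and N :: "nat \<Rightarrow> (nat list \<Rightarrow> nat) \<Rightarrow> nat"
  assumes "m \<ge> 2"
    and "of_nat (m - 1) * (\<integral>\<^sup>+x. of_nat (x * m ^ x) \<partial>p) = (\<integral>\<^sup>+x. of_nat (m ^ x) \<partial>p)"
    and "(\<integral>\<^sup>+x. of_nat (m ^ x) \<partial>p) < \<infinity>"
    and N_Suc: "\<And>n y. N (Suc n) y = (if 1 \<le> (\<Sum>l<m. Yval m n (subtree y l) [])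
                        then \<Sum>l<m. N n (subtree y l) else 0)"
  shows "(\<integral>\<^sup>+y. of_nat (m ^ Yval m n y [] * (1 + Yval m n y []) * N n y) \<partial>tree_pmf m p n)
       = (\<integral>\<^sup>+y. of_nat (m ^ Yval m 0 y [] * (1 + Yval m 0 y []) * N 0 y) \<partial>tree_pmf m p 0)
         * (\<Prod>k<n. (\<integral>\<^sup>+y. of_nat (m ^ Yval m k y []) \<partial>tree_pmf m p k) ^ (m - 1))"
proof (induction n)
  case (Suc n)
  have "(\<integral>\<^sup>+y. of_nat (m ^ Yval m (Suc n) y [] * (1 + Yval m (Suc n) y []) * N (Suc n) y) \<partial>tree_pmf m p (Suc n))
      = (\<integral>\<^sup>+y. of_nat (m ^ Yval m n y [] * (1 + Yval m n y []) * N n y) \<partial>tree_pmf m p n)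
        * (\<integral>\<^sup>+y. of_nat (m ^ Yval m n y []) \<partial>tree_pmf m p n) ^ (m - 1)"
    unfolding nn_integral_tree_pmf_Suc Yval_Suc_Nil N_Suc subtree_graft
    using tree_pmf_balance[OF assms(1-3)] by (intro nn_integral_Pi_pmf_offspring_weight assms(1)) blast
  then show ?case
    unfolding Suc.IH prod.lessThan_Suc by (simp only: mult.assoc)
qed simp

theorem proposition5p1:
  fixes m :: nat and p :: "nat pmf" and i n :: nat
  assumes "m \<ge> 2"
    and "of_nat (m - 1) * (\<integral>\<^sup>+ x. of_nat (x * m ^ x) \<partial>measure_pmf p)
           = (\<integral>\<^sup>+ x. of_nat (m ^ x) \<partial>measure_pmf p)"
    and "(\<integral>\<^sup>+ x. of_nat (m ^ x) \<partial>measure_pmf p) < \<infinity>"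
    and "n \<ge> 1"
  shows "((\<integral>\<^sup>+ y. of_nat (m ^ Yval m n y [] * (1 + Yval m n y []) * Nsharp m n y)
             \<partial>measure_pmf (tree_pmf m p n))
         = (\<integral>\<^sup>+ y. of_nat (m ^ Yval m 0 y [] * (1 + Yval m 0 y []) * Nsharp m 0 y)
             \<partial>measure_pmf (tree_pmf m p 0))
           * (\<Prod>k<n. (\<integral>\<^sup>+ y. of_nat (m ^ Yval m k y []) \<partial>measure_pmf (tree_pmf m p k)) ^ (m - 1)))
       \<and> ((\<integral>\<^sup>+ y. of_nat (m ^ Yval m n y [] * (1 + Yval m n y []) * Ni m i n y)
             \<partial>measure_pmf (tree_pmf m p n))
         = (\<integral>\<^sup>+ y. of_nat (m ^ Yval m 0 y [] * (1 + Yval m 0 y []) * Ni m i 0 y)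
             \<partial>measure_pmf (tree_pmf m p 0))
           * (\<Prod>k<n. (\<integral>\<^sup>+ y. of_nat (m ^ Yval m k y []) \<partial>measure_pmf (tree_pmf m p k)) ^ (m - 1)))"
  using tree_pmf_weight_product[OF assms(1-3) Nsharp_Suc[of m]]
    tree_pmf_weight_product[OF assms(1-3) Ni_Suc[of m i]] by blast

end
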